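(* Let $\{n_j\}_{j\ge1}$ be an infinite sequence of positive integers with $n_j\mid n_{j+1}$ for all $j$. Let $A=\prod_{j=1}^\infty\mathbb{Z}_{n_j}$ with the product topology (each $\mathbb{Z}_{n_j}=\mathbb{Z}/n_j\mathbb{Z}$ discrete), let $E=(1,1,\dots)\in A$, and let $\bar B$ be the closure in $A$ of $\{nE=(n,n,\dots):n\in\mathbb{Z}\}$. For $k\in\mathbb{Z}$ let $b=kE=(k,k,\dots)$. Then $\{nb:n\in\mathbb{Z}\}$ is dense in $\bar B$ if and only if $\gcd(k,n_j)=1$ for every $j$.
   Context: $A$ is a compact abelian group under coordinatewise addition; its product topology is induced by the metric $\mathrm{dist}(x,y)=\sum_{j\ge1}2^{-j}\frac{\delta_j(x_j,y_j)}{1+\delta_j(x_j,y_j)}$ where $\delta_j$ is the discrete metric on $\mathbb{Z}_{n_j}$. An element $b\in\bar B$ is called a generator if $\{nb:n\in\mathbb{Z}\}$ is dense in $\bar B$. *)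

theory Defs
  imports "HOL-Analysis.Analysis"
begin

text \<open>The group A = product of Z_{n_j}. Coordinate j (indexed from 0, i.e. shifted by one)
  is represented by its canonical residue in {0..<n j}. A carries the product of
  the discrete topologies.\<close>

definition cyc_prod_top :: "(nat \<Rightarrow> nat) \<Rightarrow> (nat \<Rightarrow> int) topology" where
  "cyc_prod_top n = product_topology (\<lambda>j. discrete_topology {0..<int (n j)}) UNIV"

definition const_elt :: "(nat \<Rightarrow> nat) \<Rightarrow> int \<Rightarrow> (nat \<Rightarrow> int)" where
  "const_elt n k = (\<lambda>j. k mod int (n j))"

definition zmult :: "(nat \<Rightarrow> nat) \<Rightarrow> int \<Rightarrow> (nat \<Rightarrow> int) \<Rightarrow> (nat \<Rightarrow> int)" where
  "zmult n m x = (\<lambda>j. (m * x j) mod int (n j))"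

definition Bbar :: "(nat \<Rightarrow> nat) \<Rightarrow> (nat \<Rightarrow> int) set" where
  "Bbar n = (cyc_prod_top n) closure_of {zmult n m (const_elt n 1) | m. True}"

end

theory Submission
  imports Defs "HOL-Number_Theory.Cong"
begin

text \<open>In a product of discrete spaces a basic neighbourhood of a point fixes finitely many
  coordinates, so a point is adherent to a set exactly when every finite pattern of its
  coordinates is realised by a member of the set. Under the divisibility chain
  \<open>n 0 dvd n 1 dvd \<dots>\<close> finitely many coordinates of \<open>a E\<close> are determined by the one
  of largest index, so \<open>a E\<close> lies in the closure of \<open>{m k E}\<close> iff \<open>a\<close> is a multiple of \<open>k\<close> modulo every \<open>n j\<close>.
  Hence \<open>E\<close> is a limit of multiples of \<open>k E\<close> iff \<open>k\<close> is invertible modulo every \<open>n j\<close>,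
  and then every \<open>a E\<close> is.\<close>

lemma in_closure_of_product_discrete:
  assumes "S \<subseteq> (\<Pi>\<^sub>E i\<in>I. U i)"
  shows "x \<in> product_topology (\<lambda>i. discrete_topology (U i)) I closure_of S \<longleftrightarrow>
           x \<in> (\<Pi>\<^sub>E i\<in>I. U i) \<and> (\<forall>F. finite F \<and> F \<subseteq> I \<longrightarrow> (\<exists>y\<in>S. \<forall>i\<in>F. y i = x i))"
    (is "x \<in> ?X closure_of S \<longleftrightarrow> _ \<and> ?approx")
proof (cases "x \<in> (\<Pi>\<^sub>E i\<in>I. U i)")
  case x: True
  show ?thesis
  proof
    assume closure: "x \<in> ?X closure_of S"
    show "x \<in> (\<Pi>\<^sub>E i\<in>I. U i) \<and> ?approx"
    proof (intro conjI allI impI x)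
      fix F assume F: "finite F \<and> F \<subseteq> I"
      define Y where "Y i = (if i \<in> F then {x i} else U i)" for i
      have "openin ?X (\<Pi>\<^sub>E i\<in>I. Y i)"
        by (rule product_topology_basis)
          (use F x in \<open>auto simp: Y_def intro: finite_subset[of _ F]\<close>)
      moreover have "x \<in> (\<Pi>\<^sub>E i\<in>I. Y i)"
        using x by (auto simp: Y_def)
      ultimately obtain y where "y \<in> S" "y \<in> (\<Pi>\<^sub>E i\<in>I. Y i)"
        using closure by (auto simp: in_closure_of)
      moreover have "y i = x i" if "i \<in> F" for i
        using \<open>y \<in> (\<Pi>\<^sub>E i\<in>I. Y i)\<close> F that
        by (metis PiE_mem Y_def singletonD subsetD)
      ultimately show "\<exists>y\<in>S. \<forall>i\<in>F. y i = x i"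
        by blast
    qed
  next
    assume approx: "x \<in> (\<Pi>\<^sub>E i\<in>I. U i) \<and> ?approx"
    show "x \<in> ?X closure_of S"
      unfolding in_closure_of
    proof (intro conjI allI impI)
      fix T assume "x \<in> T \<and> openin ?X T"
      then obtain Y where Y: "x \<in> (\<Pi>\<^sub>E i\<in>I. Y i)" "finite {i. Y i \<noteq> U i}"
          "(\<Pi>\<^sub>E i\<in>I. Y i) \<subseteq> T"
        using product_topology_open_contains_basis[of "\<lambda>i. discrete_topology (U i)" I T x]
        by auto
      then obtain y where y: "y \<in> S" "\<forall>i\<in>{i. Y i \<noteq> U i} \<inter> I. y i = x i"
        using approx by blast
      have "y i \<in> Y i" if "i \<in> I" for i
      proof (cases "Y i = U i")
        case True
        then show ?thesis using \<open>y \<in> S\<close> assms that by auto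
      next
        case False
        then show ?thesis using y(2) Y(1) that by auto
      qed
      moreover have "y \<in> extensional I"
        using \<open>y \<in> S\<close> assms by (auto simp: PiE_iff)
      ultimately have "y \<in> (\<Pi>\<^sub>E i\<in>I. Y i)"
        by (simp add: PiE_iff)
      then show "\<exists>y. y \<in> S \<and> y \<in> T"
        using y(1) Y(3) by blast
    qed (use x in simp)
  qed
qed (simp add: in_closure_of)

lemma dense_in_closure_of_iff:
  assumes "E \<subseteq> topspace X" and "M \<subseteq> X closure_of E"
  shows "subtopology X (X closure_of E) closure_of M = X closure_of E \<longleftrightarrow> E \<subseteq> X closure_of M"
proof -
  have closure_M: "X closure_of M \<subseteq> X closure_of E"
    using assms(2) by (simp add: closure_of_minimal)
  then have "subtopology X (X closure_of E) closure_of M = X closure_of M"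
    using assms(2) by (simp add: closure_of_subtopology Int_absorb1)
  moreover have "X closure_of M = X closure_of E \<longleftrightarrow> E \<subseteq> X closure_of M"
    using closure_M closure_of_subset[OF assms(1)] closure_of_minimal[of E "X closure_of M" X]
    by auto
  ultimately show ?thesis
    by simp
qed

lemma dvd_chain_le:
  fixes n :: "nat \<Rightarrow> 'a :: comm_monoid_mult"
  assumes "\<And>j. n j dvd n (Suc j)" and "i \<le> j"
  shows "n i dvd n j"
  using assms(2) by (induction rule: dec_induct) (auto intro: dvd_trans assms(1))

lemma coprime_iff_multiples_cover_residues:
  fixes k N :: int
  shows "coprime k N \<longleftrightarrow> (\<forall>a. \<exists>m. [m * k = a] (mod N))"
proof
  assume "coprime k N"
  then obtain x where "[k * x = 1] (mod N)"
    by (auto simp: coprime_iff_invertible_int)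
  then have "[a * x * k = a] (mod N)" for a
    using cong_scalar_left[of "k * x" 1 N a] by (simp add: ac_simps)
  then show "\<forall>a. \<exists>m. [m * k = a] (mod N)"
    by blast
next
  assume "\<forall>a. \<exists>m. [m * k = a] (mod N)"
  then obtain m where "[m * k = 1] (mod N)"
    by blast
  then show "coprime k N"
    by (auto simp: coprime_iff_invertible_int ac_simps)
qed

lemma topspace_cyc_prod_top:
  "topspace (cyc_prod_top n) = (\<Pi>\<^sub>E j\<in>UNIV. {0..<int (n j)})"
  by (simp add: cyc_prod_top_def)

lemma const_elt_in_topspace:
  assumes "\<And>j. n j > 0"
  shows "const_elt n a \<in> topspace (cyc_prod_top n)"
  using assms by (simp add: topspace_cyc_prod_top const_elt_def PiE_iff)

lemma multiples_const_elt:
  "{zmult n m (const_elt n k) | m. True} = const_elt n ` range (\<lambda>m. m * k)"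
  by (auto simp: zmult_def const_elt_def mod_mult_right_eq)

lemma const_elt_in_closure_iff:
  assumes pos: "\<And>j. n j > 0" and chain: "\<And>j. n j dvd n (Suc j)"
  shows "const_elt n a \<in> cyc_prod_top n closure_of (const_elt n ` S) \<longleftrightarrow>
           (\<forall>j. \<exists>s\<in>S. [s = a] (mod int (n j)))"
proof -
  have const_elt: "const_elt n b \<in> (\<Pi>\<^sub>E j\<in>UNIV. {0..<int (n j)})" for b
    using const_elt_in_topspace[of n b] pos by (simp add: topspace_cyc_prod_top)
  then have image: "const_elt n ` S \<subseteq> (\<Pi>\<^sub>E j\<in>UNIV. {0..<int (n j)})"
    by blast
  have "const_elt n a \<in> cyc_prod_top n closure_of (const_elt n ` S) \<longleftrightarrow>
      (\<forall>F. finite F \<longrightarrow> (\<exists>s\<in>S. \<forall>j\<in>F. [s = a] (mod int (n j))))"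
    unfolding cyc_prod_top_def in_closure_of_product_discrete[OF image]
    using const_elt by (simp add: const_elt_def cong_def)
  also have "\<dots> \<longleftrightarrow> (\<forall>j. \<exists>s\<in>S. [s = a] (mod int (n j)))"
  proof (intro iffI allI impI)
    fix j
    assume "\<forall>F. finite F \<longrightarrow> (\<exists>s\<in>S. \<forall>j\<in>F. [s = a] (mod int (n j)))"
    then show "\<exists>s\<in>S. [s = a] (mod int (n j))"
      by (metis finite.emptyI finite.insertI singletonI)
  next
    fix F :: "nat set"
    assume "\<forall>j. \<exists>s\<in>S. [s = a] (mod int (n j))" and "finite F"
    then obtain s where "s \<in> S" and s: "[s = a] (mod int (n (Max (insert 0 F))))"
      by blast
    have "n j dvd n (Max (insert 0 F))" if "j \<in> F" for j
      using \<open>finite F\<close> that by (intro dvd_chain_le[of n, OF chain]) simp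
    then have "[s = a] (mod int (n j))" if "j \<in> F" for j
      using that by (intro cong_dvd_modulus[OF s]) simp
    then show "\<exists>s\<in>S. \<forall>j\<in>F. [s = a] (mod int (n j))"
      using \<open>s \<in> S\<close> by blast
  qed
  finally show ?thesis .
qed

theorem proposition4p7:
  fixes n :: "nat \<Rightarrow> nat" and k :: int
  assumes "\<And>j. n j > 0"
    and "\<And>j. n j dvd n (Suc j)"
  shows "(subtopology (cyc_prod_top n) (Bbar n)) closure_of
            {zmult n m (const_elt n k) | m. True} = Bbar n
         \<longleftrightarrow> (\<forall>j. gcd k (int (n j)) = 1)"
proof -
  let ?X = "cyc_prod_top n" and ?M = "const_elt n ` range (\<lambda>m. m * k)"
    and ?E = "range (const_elt n)"
  have Bbar: "Bbar n = ?X closure_of ?E"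
    unfolding Bbar_def multiples_const_elt by simp
  have E: "?E \<subseteq> topspace ?X"
    using const_elt_in_topspace[of n] assms(1) by blast
  have "?M \<subseteq> ?X closure_of ?E"
    using closure_of_subset[OF E] by blast
  then have "subtopology ?X (Bbar n) closure_of ?M = Bbar n \<longleftrightarrow> ?E \<subseteq> ?X closure_of ?M"
    unfolding Bbar using E by (rule dense_in_closure_of_iff[rotated])
  also have "\<dots> \<longleftrightarrow> (\<forall>a j. \<exists>m. [m * k = a] (mod int (n j)))"
    by (simp add: image_subset_iff const_elt_in_closure_iff[of n, OF assms])
  also have "\<dots> \<longleftrightarrow> (\<forall>j. gcd k (int (n j)) = 1)"
    by (subst all_comm) (simp add: coprime_iff_gcd_eq_1[symmetric] coprime_iff_multiples_cover_residues)
  finally show ?thesis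
    unfolding multiples_const_elt .
qed

end
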